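(* Let $P$, $T_\Sigma$, the lattice points $b_1,\dots,b_{p+3}$ and the coefficients $a_i(q)$ of the mirror curve be as described in the context. Suppose $b_{i_1}$ and $b_{i_2}$ are joined by an edge (1-cell) of $T_\Sigma$ and $b_{i_3}$ is a lattice point of $P$ with $2b_{i_2}=b_{i_1}+b_{i_3}$. Then $\dfrac{a_{i_1}(q)\,a_{i_3}(q)}{a_{i_2}(q)^2}$ is a non-constant monomial of $q$.
   Context: Let $P\subset\mathbb{R}^2$ be a convex lattice polygon with a unimodular triangulation $T_\Sigma$ (every triangle of $T_\Sigma$ has lattice vertices and area $1/2$, and the vertex set of $T_\Sigma$ is $P\cap\mathbb{Z}^2$); this encodes a smooth toric Calabi–Yau 3-fold whose fan has rays generated by $(m,n,1)$, $(m,n)\in P\cap\mathbb{Z}^2$, and 3-cones over the triangles of $T_\Sigma$. Write $P\cap\mathbb{Z}^2=\{b_1,\dots,b_{p+3}\}$, $b_i=(m_i,n_i)$, with $b_1=(1,0)$, $b_2=(0,1)$, $b_3=(0,0)$, where $\sigma_1=\{b_1,b_2,b_3\}$ is a triangle of $T_\Sigma$. Let $L=\ker(\mathbb{Z}^{p+3}\to\mathbb{Z}^3,\ e_i\mapsto(m_i,n_i,1))$ and let $D_i\in L^\vee=\mathrm{Hom}(L,\mathbb{Z})$ be the restriction of the $i$-th coordinate functional. For a triangle $\sigma$ of $T_\Sigma$ let $I'_\sigma$ be the set of indices of its vertices; then $\{D_j:j\notin I'_\sigma\}$ is a basis of $L^\vee\otimes\mathbb{Q}$. Fix $H_1,\dots,H_p\in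 L^\vee\otimes\mathbb{Q}$ (nef classes) such that for every triangle $\sigma$, $H_k=\sum_{j\notin I'_\sigma}s^\sigma_{k,j}D_j$ with all $s^\sigma_{k,j}\in\mathbb{Z}_{\ge0}$ and the $p\times p$ matrix $(s^\sigma_{k,j})$ nondegenerate. For $q=(q_1,\dots,q_p)\in(\mathbb{C}^* )^p$ put $a_i(q)=1$ for $i=1,2,3$ and $a_i(q)=\prod_{k=1}^p q_k^{s^{\sigma_1}_{k,i}}$ for $i\ge4$. The mirror curve is the zero set in $(\mathbb{C}^* )^2$ of $H(X,Y,q)=\sum_{i=1}^{p+3}a_i(q)X^{m_i}Y^{n_i}=1+X+Y+\sum_{i\ge4}a_i(q)X^{m_i}Y^{n_i}$. A non-constant monomial of $q$ means $\prod_k q_k^{e_k}$ with $e_k\in\mathbb{Z}_{\ge0}$ not all zero. *)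

theory Defs
  imports "HOL-Analysis.Analysis" "Jordan_Normal_Form.Determinant"
begin

definition pt :: "int \<times> int \<Rightarrow> real \<times> real" where
  "pt z = (of_int (fst z), of_int (snd z))"

definition convex_lattice_polygon :: "(real \<times> real) set \<Rightarrow> bool" where
  "convex_lattice_polygon P \<longleftrightarrow>
     (\<exists>S. finite S \<and> P = convex hull (pt ` S)) \<and> interior P \<noteq> {}"

text \<open>The lattice points of P are enumerated as b 1, ..., b N (N = p+3).
  A triangle of the triangulation is given by the set of indices of its vertices.\<close>
definition tri_hull :: "(nat \<Rightarrow> int \<times> int) \<Rightarrow> nat set \<Rightarrow> (real \<times> real) set" where
  "tri_hull b \<sigma> = convex hull ((pt \<circ> b) ` \<sigma>)"

definition unimodular_triangle :: "(nat \<Rightarrow> int \<times> int) \<Rightarrow> nat set \<Rightarrow> bool" where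
  "unimodular_triangle b \<sigma> \<longleftrightarrow> card \<sigma> = 3 \<and>
     (\<forall>i j k. \<sigma> = {i, j, k} \<longrightarrow>
        \<bar>(fst (b j) - fst (b i)) * (snd (b k) - snd (b i))
          - (fst (b k) - fst (b i)) * (snd (b j) - snd (b i))\<bar> = 1)"

definition unimodular_triangulation ::
  "(real \<times> real) set \<Rightarrow> nat \<Rightarrow> (nat \<Rightarrow> int \<times> int) \<Rightarrow> nat set set \<Rightarrow> bool" where
  "unimodular_triangulation P N b T \<longleftrightarrow>
     finite T \<and>
     (\<forall>\<sigma>\<in>T. \<sigma> \<subseteq> {1..N} \<and> unimodular_triangle b \<sigma>) \<and>
     \<Union>T = {1..N} \<and>
     \<Union>(tri_hull b ` T) = P \<and>
     (\<forall>\<sigma>\<in>T. \<forall>\<tau>\<in>T. tri_hull b \<sigma> \<inter> tri_hull b \<tau> = tri_hull b (\<sigma> \<inter> \<tau>))"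

text \<open>The lattice L = ker(Z^N \<rightarrow> Z^3, e_i \<mapsto> (m_i, n_i, 1)), with vectors represented
  as functions nat \<Rightarrow> int supported on {1..N}. D_j is l \<mapsto> l j.\<close>
definition charge_lattice :: "nat \<Rightarrow> (nat \<Rightarrow> int \<times> int) \<Rightarrow> (nat \<Rightarrow> int) set" where
  "charge_lattice N b = {l. (\<forall>j. j \<notin> {1..N} \<longrightarrow> l j = 0) \<and>
      (\<Sum>j\<in>{1..N}. l j * fst (b j)) = 0 \<and>
      (\<Sum>j\<in>{1..N}. l j * snd (b j)) = 0 \<and>
      (\<Sum>j\<in>{1..N}. l j) = 0}"

definition s_matrix :: "nat \<Rightarrow> nat \<Rightarrow> (nat \<Rightarrow> nat \<Rightarrow> nat) \<Rightarrow> nat set \<Rightarrow> int mat" where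
  "s_matrix p N s\<sigma> \<sigma> =
     mat p p (\<lambda>(k, j). int (s\<sigma> (k + 1) (sorted_list_of_set ({1..N} - \<sigma>) ! j)))"

definition mirror_coeff ::
  "nat \<Rightarrow> (nat \<Rightarrow> nat \<Rightarrow> nat) \<Rightarrow> nat \<Rightarrow> (nat \<Rightarrow> complex) \<Rightarrow> complex" where
  "mirror_coeff p s1 i q = (if i \<in> {1, 2, 3} then 1 else (\<Prod>k\<in>{1..p}. q k ^ s1 k i))"

end

theory Submission
  imports Defs
begin

text \<open>The vector \<open>l = e\<^sub>i\<^sub>1 + e\<^sub>i\<^sub>3 - 2 e\<^sub>i\<^sub>2\<close> lies in the charge lattice \<open>L\<close>, because
  \<open>b\<^sub>i\<^sub>2\<close> is the midpoint of \<open>b\<^sub>i\<^sub>1\<close> and \<open>b\<^sub>i\<^sub>3\<close>. Pair \<open>H\<^sub>k\<close> with \<open>l\<close> in two bases.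
  Expanded in the basis of a triangle \<open>\<sigma>\<close> containing the edge \<open>b\<^sub>i\<^sub>1 b\<^sub>i\<^sub>2\<close> (which cannot
  contain \<open>i\<^sub>3\<close>, since a unimodular triangle has no three collinear vertices), it gives
  \<open>s\<^sup>\<sigma>\<^sub>k\<^sub>,\<^sub>i\<^sub>3 \<ge> 0\<close>; this column of the nondegenerate matrix \<open>s\<^sup>\<sigma>\<close> is not zero. Expanded in
  the basis of \<open>\<sigma>\<^sub>1\<close>, it gives the exponent of \<open>q\<^sub>k\<close> in \<open>a\<^sub>i\<^sub>1 a\<^sub>i\<^sub>3 / a\<^sub>i\<^sub>2\<^sup>2\<close>.\<close>

lemma det_zero_if_zero_col:
  fixes A :: "'a::idom mat"
  assumes A: "A \<in> carrier_mat n n" and j: "j < n" and zero_col: "\<And>i. i < n \<Longrightarrow> A $$ (i, j) = 0"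
  shows "det A = 0"
proof -
  have "A *\<^sub>v unit_vec n j = 0\<^sub>v n"
    using A j zero_col by (intro eq_vecI) (auto simp: mult_mat_vec_def)
  then show ?thesis
    using A j by (subst det_0_iff_vec_prod_zero[OF A]) (auto intro!: exI[of _ "unit_vec n j"])
qed

definition second_difference :: "nat \<Rightarrow> nat \<Rightarrow> nat \<Rightarrow> nat \<Rightarrow> int" where
  "second_difference i1 i2 i3 j = of_bool (j = i1) + of_bool (j = i3) - 2 * of_bool (j = i2)"

lemma sum_mult_second_difference:
  fixes f :: "nat \<Rightarrow> 'a::comm_ring_1"
  assumes "finite A"
  shows "(\<Sum>j\<in>A. f j * of_int (second_difference i1 i2 i3 j))
    = (if i1 \<in> A then f i1 else 0) + (if i3 \<in> A then f i3 else 0) - 2 * (if i2 \<in> A then f i2 else 0)"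
proof -
  have "f j * of_int (second_difference i1 i2 i3 j)
      = (if j = i1 then f j else 0) + (if j = i3 then f j else 0) - 2 * (if j = i2 then f j else 0)" for j
    by (simp add: second_difference_def algebra_simps)
  then show ?thesis
    using assms by (simp add: sum.distrib sum_subtractf sum_distrib_left[symmetric] sum.delta')
qed

lemma second_difference_in_charge_lattice:
  assumes "i1 \<in> {1..N}" "i2 \<in> {1..N}" "i3 \<in> {1..N}"
    and "2 * fst (b i2) = fst (b i1) + fst (b i3)" "2 * snd (b i2) = snd (b i1) + snd (b i3)"
  shows "second_difference i1 i2 i3 \<in> charge_lattice N b"
proof -
  have sum_eq: "(\<Sum>j\<in>{1..N}. second_difference i1 i2 i3 j * g j) = g i1 + g i3 - 2 * g i2"
    for g :: "nat \<Rightarrow> int"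
    using sum_mult_second_difference[of "{1..N}" g i1 i2 i3] assms(1-3) by (simp add: mult.commute)
  show ?thesis
    unfolding charge_lattice_def
    using sum_eq[of "\<lambda>j. fst (b j)"] sum_eq[of "\<lambda>j. snd (b j)"] sum_eq[of "\<lambda>_. 1"] assms
    by (auto simp: second_difference_def)
qed

lemma midpoint_not_vertex_of_unimodular_triangle:
  assumes uni: "unimodular_triangle b \<sigma>" and edge: "i1 \<noteq> i2" "{i1, i2} \<subseteq> \<sigma>"
    and mid: "2 * fst (b i2) = fst (b i1) + fst (b i3)" "2 * snd (b i2) = snd (b i1) + snd (b i3)"
  shows "i3 \<notin> \<sigma>"
proof
  assume i3: "i3 \<in> \<sigma>"
  have "card \<sigma> = 3" using uni unfolding unimodular_triangle_def by simp
  then have "card (\<sigma> - {i1, i2}) = 1"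
    using edge by (simp add: card_Diff_subset card.infinite finite_subset)
  then obtain k where "\<sigma> - {i1, i2} = {k}"
    by (rule card_1_singletonE)
  then have \<sigma>: "\<sigma> = {i1, i2, k}"
    using edge by blast
  have det: "\<bar>(fst (b i2) - fst (b i1)) * (snd (b k) - snd (b i1))
      - (fst (b k) - fst (b i1)) * (snd (b i2) - snd (b i1))\<bar> = 1"
    using uni \<sigma> unfolding unimodular_triangle_def by blast
  consider "i3 \<in> {i1, i2}" | "i3 = k" using i3 \<sigma> by blast
  then show False
  proof cases
    case 1
    then have "b i2 = b i1" using mid by (auto simp: prod_eq_iff)
    then show False using det by simp
  next
    case 2
    then have k_fst: "fst (b k) - fst (b i1) = 2 * (fst (b i2) - fst (b i1))"
      and k_snd: "snd (b k) - snd (b i1) = 2 * (snd (b i2) - snd (b i1))"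
      using mid by simp_all
    have "(fst (b i2) - fst (b i1)) * (snd (b k) - snd (b i1))
        = (fst (b k) - fst (b i1)) * (snd (b i2) - snd (b i1))"
      unfolding k_fst k_snd by (simp add: algebra_simps)
    then show False using det by simp
  qed
qed

lemma det_s_matrix_zero_if_zero_col:
  assumes card: "card ({1..N} - \<sigma>) = p" and j: "j \<in> {1..N} - \<sigma>"
    and zero_col: "\<forall>k\<in>{1..p}. s\<sigma> k j = 0"
  shows "det (s_matrix p N s\<sigma> \<sigma>) = 0"
proof -
  define js where "js = sorted_list_of_set ({1..N} - \<sigma>)"
  have "length js = p" "j \<in> set js"
    using card j unfolding js_def by simp_all
  then obtain c where c: "c < p" "js ! c = j"
    by (metis in_set_conv_nth)
  show ?thesis
  proof (rule det_zero_if_zero_col[of _ p c])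
    fix k assume "k < p"
    then show "s_matrix p N s\<sigma> \<sigma> $$ (k, c) = 0"
      using c zero_col unfolding s_matrix_def js_def[symmetric] by simp
  qed (use c in \<open>simp_all add: s_matrix_def\<close>)
qed

definition mirror_exponent :: "(nat \<Rightarrow> nat \<Rightarrow> nat) \<Rightarrow> nat \<Rightarrow> nat \<Rightarrow> nat" where
  "mirror_exponent s1 k i = (if i \<in> {1, 2, 3} then 0 else s1 k i)"

lemma mirror_coeff_eq_monomial:
  "mirror_coeff p s1 i q = (\<Prod>k\<in>{1..p}. q k ^ mirror_exponent s1 k i)"
  unfolding mirror_coeff_def mirror_exponent_def by simp

lemma mirror_exponent_second_difference:
  fixes h :: rat
  assumes h_\<sigma>: "h = (\<Sum>j\<in>{1..N} - \<sigma>. of_nat (s\<sigma> k j) * of_int (second_difference i1 i2 i3 j))"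
    and h_\<sigma>1: "h = (\<Sum>j\<in>{1..N} - {1, 2, 3}. of_nat (s\<^sub>1 k j) * of_int (second_difference i1 i2 i3 j))"
    and edge: "{i1, i2} \<subseteq> \<sigma>" and i3: "i3 \<notin> \<sigma>"
    and indices: "i1 \<in> {1..N}" "i2 \<in> {1..N}" "i3 \<in> {1..N}"
  shows "mirror_exponent s\<^sub>1 k i1 + mirror_exponent s\<^sub>1 k i3 = 2 * mirror_exponent s\<^sub>1 k i2 + s\<sigma> k i3"
proof -
  let ?t = "mirror_exponent s\<^sub>1 k"
  have "h = of_nat (s\<sigma> k i3)"
    using h_\<sigma> sum_mult_second_difference[of "{1..N} - \<sigma>" "\<lambda>j. of_nat (s\<sigma> k j) :: rat" i1 i2 i3]
      edge i3 indices by simp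
  moreover have "h = of_nat (?t i1) + of_nat (?t i3) - 2 * of_nat (?t i2)"
    using h_\<sigma>1 sum_mult_second_difference[of "{1..N} - {1, 2, 3}" "\<lambda>j. of_nat (s\<^sub>1 k j) :: rat" i1 i2 i3]
      indices by (simp add: mirror_exponent_def)
  ultimately have "(of_nat (?t i1 + ?t i3) :: rat) = of_nat (2 * ?t i2 + s\<sigma> k i3)"
    by simp
  then show ?thesis
    by (simp only: of_nat_eq_iff)
qed

lemma monomial_quotient:
  fixes q :: "'i \<Rightarrow> 'a::field"
  assumes nonzero: "\<forall>k\<in>K. q k \<noteq> 0" and exps: "\<forall>k\<in>K. u k + w k = 2 * v k + e k"
  shows "(\<Prod>k\<in>K. q k ^ u k) * (\<Prod>k\<in>K. q k ^ w k) / (\<Prod>k\<in>K. q k ^ v k) ^ 2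
    = (\<Prod>k\<in>K. q k ^ e k)"
proof -
  have "(\<Prod>k\<in>K. q k ^ u k) * (\<Prod>k\<in>K. q k ^ w k) = (\<Prod>k\<in>K. q k ^ (u k + w k))"
    by (simp add: power_add prod.distrib)
  also have "\<dots> = (\<Prod>k\<in>K. q k ^ (2 * v k + e k))"
    using exps by simp
  also have "\<dots> = (\<Prod>k\<in>K. q k ^ v k) ^ 2 * (\<Prod>k\<in>K. q k ^ e k)"
    by (simp add: power_add power_mult prod.distrib prod_power_distrib mult.commute)
  moreover have "(\<Prod>k\<in>K. q k ^ v k) \<noteq> 0"
    using nonzero by (cases "finite K") simp_all
  ultimately show ?thesis
    by simp
qed

theorem proposition2p5p3:
  fixes P :: "(real \<times> real) set" and p :: nat and b :: "nat \<Rightarrow> int \<times> int"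
    and T :: "nat set set"
    and H :: "nat \<Rightarrow> (nat \<Rightarrow> int) \<Rightarrow> rat"
    and s :: "nat set \<Rightarrow> nat \<Rightarrow> nat \<Rightarrow> nat"
    and i1 i2 i3 :: nat
  assumes P: "convex_lattice_polygon P"
    and b_enum: "bij_betw b {1..p+3} {z. pt z \<in> P}"
    and b123: "b 1 = (1, 0)" "b 2 = (0, 1)" "b 3 = (0, 0)"
    and T: "unimodular_triangulation P (p+3) b T"
    and sigma1: "{1, 2, 3} \<in> T"
    and H: "\<forall>\<sigma>\<in>T. \<forall>k\<in>{1..p}. \<forall>l\<in>charge_lattice (p+3) b.
              H k l = (\<Sum>j\<in>{1..p+3} - \<sigma>. of_nat (s \<sigma> k j) * of_int (l j))"
    and nondeg: "\<forall>\<sigma>\<in>T. det (s_matrix p (p+3) (s \<sigma>) \<sigma>) \<noteq> 0"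
    and edge: "i1 \<noteq> i2" "\<exists>\<sigma>\<in>T. {i1, i2} \<subseteq> \<sigma>"
    and i3: "i3 \<in> {1..p+3}"
    and collinear: "2 * fst (b i2) = fst (b i1) + fst (b i3)"
                   "2 * snd (b i2) = snd (b i1) + snd (b i3)"
  shows "\<exists>e :: nat \<Rightarrow> nat. (\<exists>k\<in>{1..p}. e k \<noteq> 0) \<and>
           (\<forall>q :: nat \<Rightarrow> complex. (\<forall>k\<in>{1..p}. q k \<noteq> 0) \<longrightarrow>
              mirror_coeff p (s {1, 2, 3}) i1 q * mirror_coeff p (s {1, 2, 3}) i3 q
                / mirror_coeff p (s {1, 2, 3}) i2 q ^ 2
              = (\<Prod>k\<in>{1..p}. q k ^ e k))"
proof -
  let ?N = "p + 3" and ?l = "second_difference i1 i2 i3" and ?t = "mirror_exponent (s {1, 2, 3})"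
  obtain \<sigma> where \<sigma>: "\<sigma> \<in> T" and edge_in_\<sigma>: "{i1, i2} \<subseteq> \<sigma>"
    using edge by blast
  have \<sigma>_sub: "\<sigma> \<subseteq> {1..?N}" and \<sigma>_uni: "unimodular_triangle b \<sigma>"
    using T \<sigma> unfolding unimodular_triangulation_def by auto
  have i3_notin: "i3 \<notin> \<sigma>"
    using midpoint_not_vertex_of_unimodular_triangle[OF \<sigma>_uni edge(1) edge_in_\<sigma> collinear] .
  have indices: "i1 \<in> {1..?N}" "i2 \<in> {1..?N}" "i3 \<in> {1..?N}"
    using edge_in_\<sigma> \<sigma>_sub i3 by auto
  have l: "?l \<in> charge_lattice ?N b"
    using second_difference_in_charge_lattice[OF indices collinear] .
  have exps: "?t k i1 + ?t k i3 = 2 * ?t k i2 + s \<sigma> k i3" if "k \<in> {1..p}" for k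
    using mirror_exponent_second_difference[where s\<sigma> = "s \<sigma>" and s\<^sub>1 = "s {1, 2, 3}",
        OF H[rule_format, OF \<sigma> that l] H[rule_format, OF sigma1 that l]
        edge_in_\<sigma> i3_notin indices] .
  have "card ({1..?N} - \<sigma>) = p"
    using \<sigma>_sub \<sigma>_uni by (simp add: card_Diff_subset finite_subset unimodular_triangle_def)
  then have nonconstant: "\<exists>k\<in>{1..p}. s \<sigma> k i3 \<noteq> 0"
    using det_s_matrix_zero_if_zero_col[of ?N \<sigma> p i3 "s \<sigma>"] nondeg \<sigma> indices i3_notin by blast
  show ?thesis
    unfolding mirror_coeff_eq_monomial
    using exps by (intro exI[of _ "\<lambda>k. s \<sigma> k i3"] conjI nonconstant allI impI monomial_quotient) auto
qed

end
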